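(* For every constant $\delta>0$ there exist constants $c_\delta>0$ and $n_0$ such that for all $n\ge n_0$, all integers $k$ with $c_\delta\log n\le k\le n$, all integers $d\ge0$ and $t\ge1$ with $(d+1)\mid t$, every binary $t\times n$ matrix $M$ that is $d$-runlength constrained and is a (zero-error) QNAGT scheme for $k$ defectives satisfies $$t\ge\frac{2(1-\delta)\,k\log(1+n/k)}{\log\left(\frac{2\pi e k}{d+1}+2\right)}.$$
   Context: $\log$ denotes the base-2 logarithm. A binary $t\times n$ matrix $M$ is $d$-runlength constrained if in every column, any two $1$'s are separated by a run of at least $d$ zeros, i.e. $M_{ij}=M_{i'j}=1$ with $i<i'$ implies $i'-i\ge d+1$. A vector is $k$-sparse if its Hamming weight is at most $k$. $M$ is a zero-error QNAGT scheme for $k$ defectives if $Mx\ne Mx'$ (real matrix-vector product) for all distinct $k$-sparse $x,x'\in\{0,1\}^n$. *)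

theory Defs
  imports Complex_Main
begin

text \<open>A binary t x n matrix is represented as M :: nat => nat => nat with
  rows i < t and columns j < n; binary means every entry (in range) is 0 or 1.
  Binary vectors of length n are functions x :: nat => nat with x j in {0,1}
  for j < n and x j = 0 for j >= n.\<close>

definition binary_matrix :: "nat \<Rightarrow> nat \<Rightarrow> (nat \<Rightarrow> nat \<Rightarrow> nat) \<Rightarrow> bool" where
  "binary_matrix t n M \<longleftrightarrow> (\<forall>i<t. \<forall>j<n. M i j \<in> {0, 1})"

definition binary_vec :: "nat \<Rightarrow> (nat \<Rightarrow> nat) \<Rightarrow> bool" where
  "binary_vec n x \<longleftrightarrow> (\<forall>j<n. x j \<in> {0, 1}) \<and> (\<forall>j\<ge>n. x j = 0)"

definition hamming_weight :: "nat \<Rightarrow> (nat \<Rightarrow> nat) \<Rightarrow> nat" where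
  "hamming_weight n x = card {j. j < n \<and> x j \<noteq> 0}"

definition sparse :: "nat \<Rightarrow> nat \<Rightarrow> (nat \<Rightarrow> nat) \<Rightarrow> bool" where
  "sparse n k x \<longleftrightarrow> hamming_weight n x \<le> k"

definition mat_vec :: "nat \<Rightarrow> (nat \<Rightarrow> nat \<Rightarrow> nat) \<Rightarrow> (nat \<Rightarrow> nat) \<Rightarrow> nat \<Rightarrow> nat" where
  "mat_vec n M x i = (\<Sum>j<n. M i j * x j)"

definition runlength_constrained :: "nat \<Rightarrow> nat \<Rightarrow> nat \<Rightarrow> (nat \<Rightarrow> nat \<Rightarrow> nat) \<Rightarrow> bool" where
  "runlength_constrained d t n M \<longleftrightarrow>
     (\<forall>j<n. \<forall>i<t. \<forall>i'<t. M i j = 1 \<and> M i' j = 1 \<and> i < i' \<longrightarrow> i' - i \<ge> d + 1)"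

definition QNAGT_scheme :: "nat \<Rightarrow> nat \<Rightarrow> nat \<Rightarrow> (nat \<Rightarrow> nat \<Rightarrow> nat) \<Rightarrow> bool" where
  "QNAGT_scheme k t n M \<longleftrightarrow>
     (\<forall>x x'. binary_vec n x \<and> binary_vec n x' \<and> sparse n k x \<and> sparse n k x' \<and> x \<noteq> x'
        \<longrightarrow> (\<exists>i<t. mat_vec n M x i \<noteq> mat_vec n M x' i))"

end

theory Submission
  imports Defs "HOL-Probability.Probability"
begin

text \<open>Encode every k'-subset A of the n columns by its outcome vector
  (card (A \<inter> R i))_(i<t), where R i is the support of row i; for a QNAGT scheme with
  k' \<le> k this encoding is injective. Gibbs' inequality against a product of discretized
  Gaussians N(\<mu> i, \<sigma>^2), with \<mu> i the mean outcome of row i, bounds ln (n choose k') by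
  \<Sum>i (ln (2\<pi>\<sigma>^2)/2 + (Var i + 1/12)/(2\<sigma>^2)). For a uniformly random A the outcome
  card (A \<inter> R i) is hypergeometric, so Var i \<le> \<mu> i; and the runlength constraint makes the
  supports of any d+1 consecutive rows disjoint, so the means of each block of d+1 rows add
  up to at most k. With \<sigma>^2 = k/(d+1) + 1/12 this gives
  ln (n choose k') \<le> t/2 \<cdot> ln (2\<pi>e\<sigma>^2). Finally ln (n choose k') \<ge> k ln (1 + n/k) - ln (n+1)
  for a suitable k' \<le> k, and the loss ln (n+1) is at most a \<delta>-fraction of k ln (1 + n/k)
  once k \<ge> (2/\<delta>) log n.\<close>

section \<open>Discretized Gaussians\<close>

lemma integrable_indicator_Ico_continuous:
  fixes f :: "real \<Rightarrow> real"
  assumes "continuous_on UNIV f"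
  shows "integrable lborel (\<lambda>x. indicator {a..<b} x * f x)"
proof -
  have "set_integrable lborel {a..b} f"
    by (rule borel_integrable_atLeastAtMost') (use assms continuous_on_subset in blast)
  then have "set_integrable lborel {a..<b} f"
    by (rule set_integrable_subset) auto
  then show ?thesis unfolding set_integrable_def by simp
qed

lemma integral_indicator_Ico_FTC:
  fixes F f :: "real \<Rightarrow> real"
  assumes "a \<le> b" and F: "\<And>x. (F has_real_derivative f x) (at x)" and f: "continuous_on UNIV f"
  shows "(LINT x|lborel. indicator {a..<b} x * f x) = F b - F a"
proof -
  have f_ab: "continuous_on {a..b} f" using f continuous_on_subset by blast
  have "(LINT x|lborel. indicator {a..b} x *\<^sub>R f x) = F b - F a"
    using assms(1) _ f_ab
  proof (rule integral_FTC_atLeastAtMost)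
    fix x show "(F has_vector_derivative f x) (at x within {a..b})"
      using DERIV_subset[OF F] by (simp add: has_real_derivative_iff_has_vector_derivative[symmetric])
  qed
  moreover have "(LINT x|lborel. indicator {a..<b} x * f x) = (LINT x|lborel. indicator {a..b} x *\<^sub>R f x)"
  proof (rule integral_cong_AE)
    show "(\<lambda>x. indicator {a..<b} x * f x) \<in> borel_measurable lborel"
      by (rule borel_measurable_integrable[OF integrable_indicator_Ico_continuous[OF f]])
    show "(\<lambda>x. indicator {a..b} x *\<^sub>R f x) \<in> borel_measurable lborel"
      using borel_integrable_atLeastAtMost'[OF f_ab] unfolding set_integrable_def
      by (rule borel_measurable_integrable)
    show "AE x in lborel. indicator {a..<b} x * f x = indicator {a..b} x *\<^sub>R f x"
      using AE_lborel_singleton[of b] by eventually_elim (auto simp: indicator_def)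
  qed
  ultimately show ?thesis by simp
qed

definition gauss_bin :: "real \<Rightarrow> real \<Rightarrow> nat \<Rightarrow> real" where
  "gauss_bin \<mu> \<sigma> j = (LINT u|lborel. indicator {real j - 1/2..<real j + 1/2} u * normal_density \<mu> \<sigma> u)"

lemma continuous_on_normal_density: "\<sigma> > 0 \<Longrightarrow> continuous_on UNIV (normal_density \<mu> \<sigma>)"
  unfolding normal_density_def by (intro continuous_intros) auto

lemma sum_indicator_bins_le_1:
  assumes "finite J"
  shows "(\<Sum>j\<in>J. indicator {real j - 1/2..<real j + 1/2} u) \<le> (1::real)"
proof -
  define j0 where "j0 = nat \<lfloor>u + 1/2\<rfloor>"
  have "indicator {real j - 1/2..<real j + 1/2} u = (0::real)" if "j \<noteq> j0" for j
  proof (rule ccontr)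
    assume "indicator {real j - 1/2..<real j + 1/2} u \<noteq> (0::real)"
    then have "real j - 1/2 \<le> u" "u < real j + 1/2" by (auto simp: indicator_def split: if_splits)
    then have "\<lfloor>u + 1/2\<rfloor> = int j" by (intro floor_unique) auto
    with that show False unfolding j0_def by simp
  qed
  then have "(\<Sum>j\<in>J. indicator {real j - 1/2..<real j + 1/2} u)
      = (\<Sum>j\<in>J. if j = j0 then indicator {real j - 1/2..<real j + 1/2} u else (0::real))"
    by (intro sum.cong) auto
  also have "\<dots> \<le> 1" using assms by (simp add: sum.delta indicator_def)
  finally show ?thesis .
qed

lemma sum_gauss_bin_le_1:
  assumes "finite J" and "\<sigma> > 0"
  shows "(\<Sum>j\<in>J. gauss_bin \<mu> \<sigma> j) \<le> 1"
proof -
  let ?bin = "\<lambda>j u. indicator {real j - 1/2..<real j + 1/2} u :: real"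
  have int: "integrable lborel (\<lambda>u. ?bin j u * normal_density \<mu> \<sigma> u)" for j
    by (rule integrable_indicator_Ico_continuous[OF continuous_on_normal_density[OF assms(2)]])
  have "(\<Sum>j\<in>J. gauss_bin \<mu> \<sigma> j) = (LINT u|lborel. (\<Sum>j\<in>J. ?bin j u) * normal_density \<mu> \<sigma> u)"
    unfolding gauss_bin_def sum_distrib_right using int by simp
  also have "\<dots> \<le> (LINT u|lborel. normal_density \<mu> \<sigma> u)"
  proof (rule integral_mono)
    show "integrable lborel (\<lambda>u. (\<Sum>j\<in>J. ?bin j u) * normal_density \<mu> \<sigma> u)"
      unfolding sum_distrib_right using int by auto
    show "(\<Sum>j\<in>J. ?bin j u) * normal_density \<mu> \<sigma> u \<le> normal_density \<mu> \<sigma> u" for u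
      using mult_right_mono[OF sum_indicator_bins_le_1[OF assms(1)], of "normal_density \<mu> \<sigma> u" u]
      by simp
  qed (use assms(2) in auto)
  also have "\<dots> = 1" by (rule integral_normal_density[OF assms(2)])
  finally show ?thesis .
qed

text \<open>The tangent line of exp at the centre a of the bin gives
  exp g \<ge> exp a \<cdot> (1 + g - a), and the right-hand side integrates exactly over the bin;
  the 1/12 is the second moment of the uniform distribution on the bin.\<close>
lemma gauss_bin_lower_bound:
  fixes \<mu> \<sigma> :: real and j :: nat
  assumes \<sigma>: "\<sigma> > 0"
  defines "a \<equiv> - ln (2 * pi * \<sigma>\<^sup>2) / 2 - ((real j - \<mu>)\<^sup>2 + 1/12) / (2 * \<sigma>\<^sup>2)"
  shows "exp a \<le> gauss_bin \<mu> \<sigma> j"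
proof -
  define L where "L = ln (sqrt (2 * pi * \<sigma>\<^sup>2))"
  have a: "a = - L - ((real j - \<mu>)\<^sup>2 + 1/12) / (2 * \<sigma>\<^sup>2)"
    unfolding a_def L_def using \<sigma> by (simp add: ln_sqrt)
  define g where "g u = - (u - \<mu>)\<^sup>2 / (2 * \<sigma>\<^sup>2) - L" for u
  have normal_density_eq: "normal_density \<mu> \<sigma> u = exp (g u)" for u
  proof -
    have "exp L = sqrt (2 * pi * \<sigma>\<^sup>2)" unfolding L_def using \<sigma> by simp
    then show ?thesis unfolding normal_density_def g_def by (simp add: exp_diff)
  qed
  define f where "f u = exp a * (1 + g u - a)" for u
  define F where "F u = exp a * (u * (1 - a - L) - (u - \<mu>)^3 / (6 * \<sigma>\<^sup>2))" for u
  have f: "continuous_on UNIV f" unfolding f_def g_def using \<sigma> by (intro continuous_intros) auto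
  have F: "(F has_real_derivative f u) (at u)" for u
    unfolding F_def f_def g_def
    using \<sigma> by (auto intro!: derivative_eq_intros simp: field_simps power2_eq_square)
  have "exp a = F (real j + 1/2) - F (real j - 1/2)"
  proof -
    have "(real j + 1/2) * (1 - a - L) - (real j + 1/2 - \<mu>)^3 / (6 * \<sigma>\<^sup>2) -
         ((real j - 1/2) * (1 - a - L) - (real j - 1/2 - \<mu>)^3 / (6 * \<sigma>\<^sup>2)) = 1"
      using \<sigma> unfolding a by (simp add: field_simps power2_eq_square power3_eq_cube)
    then show ?thesis unfolding F_def by (simp add: right_diff_distrib[symmetric])
  qed
  also have "\<dots> = (LINT u|lborel. indicator {real j - 1/2..<real j + 1/2} u * f u)"
    by (rule integral_indicator_Ico_FTC[OF _ F f, symmetric]) simp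
  also have "\<dots> \<le> gauss_bin \<mu> \<sigma> j"
    unfolding gauss_bin_def
  proof (rule integral_mono[OF integrable_indicator_Ico_continuous[OF f]
        integrable_indicator_Ico_continuous[OF continuous_on_normal_density[OF \<sigma>]]])
    fix u
    have "exp a * (1 + (g u - a)) \<le> exp a * exp (g u - a)"
      by (rule mult_left_mono) (auto simp: exp_ge_add_one_self)
    then have "f u \<le> normal_density \<mu> \<sigma> u"
      unfolding f_def normal_density_eq by (simp add: exp_diff add_diff_eq)
    then show "indicator {real j - 1/2..<real j + 1/2} u * f u
        \<le> indicator {real j - 1/2..<real j + 1/2} u * normal_density \<mu> \<sigma> u"
      by (simp add: indicator_def)
  qed
  finally show ?thesis .
qed

lemma gauss_bin_pos: "\<sigma> > 0 \<Longrightarrow> gauss_bin \<mu> \<sigma> j > 0"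
  using gauss_bin_lower_bound exp_gt_zero less_le_trans by blast

lemma minus_ln_gauss_bin_le:
  assumes "\<sigma> > 0"
  shows "- ln (gauss_bin \<mu> \<sigma> j) \<le> ln (2 * pi * \<sigma>\<^sup>2) / 2 + ((real j - \<mu>)\<^sup>2 + 1/12) / (2 * \<sigma>\<^sup>2)"
proof -
  have "- ln (2 * pi * \<sigma>\<^sup>2) / 2 - ((real j - \<mu>)\<^sup>2 + 1/12) / (2 * \<sigma>\<^sup>2) \<le> ln (gauss_bin \<mu> \<sigma> j)"
    using gauss_bin_lower_bound[OF assms, of j \<mu>] gauss_bin_pos[OF assms]
    by (metis exp_gt_zero ln_exp ln_le_cancel_iff)
  then show ?thesis by simp
qed

section \<open>An entropy bound for injective encodings\<close>

lemma ln_card_le_cross_entropy: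
  fixes q :: "'a \<Rightarrow> real"
  assumes S: "finite S" "S \<noteq> {}" and q_pos: "\<And>x. x \<in> S \<Longrightarrow> q x > 0" and q_sum: "(\<Sum>x\<in>S. q x) \<le> 1"
  shows "ln (real (card S)) \<le> (\<Sum>x\<in>S. - ln (q x)) / real (card S)"
proof -
  define N where "N = real (card S)"
  have N: "N > 0" unfolding N_def using S by (simp add: card_gt_0_iff)
  have "(\<Sum>x\<in>S. ln N + ln (q x)) \<le> (\<Sum>x\<in>S. N * q x - 1)"
  proof (rule sum_mono)
    fix x assume "x \<in> S"
    then have "q x > 0" using q_pos by auto
    then have "ln (N * q x) \<le> N * q x - 1" using N by (intro ln_le_minus_one) auto
    then show "ln N + ln (q x) \<le> N * q x - 1" using N \<open>q x > 0\<close> by (simp add: ln_mult)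
  qed
  also have "\<dots> = N * (\<Sum>x\<in>S. q x) - N" unfolding N_def by (simp add: sum_subtractf sum_distrib_left)
  also have "\<dots> \<le> 0" using q_sum N by (simp add: mult_le_cancel_left1)
  finally have "N * ln N \<le> (\<Sum>x\<in>S. - ln (q x))" unfolding N_def by (simp add: sum.distrib sum_negf)
  then show ?thesis using N unfolding N_def by (simp add: field_simps)
qed

text \<open>The code q x = \<Prod>i gauss_bin (\<mu> i) \<sigma> (Y x i) has total mass at most 1 over the
  distinct outcome vectors, so Gibbs' inequality applies to it.\<close>
lemma ln_card_le_gaussian_code_length:
  fixes Y :: "'a \<Rightarrow> nat \<Rightarrow> nat" and \<mu> :: "nat \<Rightarrow> real"
  assumes S: "finite S" "S \<noteq> {}" and I: "finite I"
    and inj: "inj_on (\<lambda>x. restrict (Y x) I) S"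
    and bounded: "\<And>x i. x \<in> S \<Longrightarrow> i \<in> I \<Longrightarrow> Y x i \<le> b" and \<sigma>: "\<sigma> > 0"
  shows "ln (real (card S)) \<le> (\<Sum>i\<in>I. ln (2 * pi * \<sigma>\<^sup>2) / 2
           + ((\<Sum>x\<in>S. (real (Y x i) - \<mu> i)\<^sup>2) / real (card S) + 1/12) / (2 * \<sigma>\<^sup>2))"
proof -
  define N where "N = real (card S)"
  have N: "N > 0" unfolding N_def using S by (simp add: card_gt_0_iff)
  define Q where "Q y = (\<Prod>i\<in>I. gauss_bin (\<mu> i) \<sigma> (y i))" for y
  define e where "e i j = ln (2 * pi * \<sigma>\<^sup>2) / 2 + ((real j - \<mu> i)\<^sup>2 + 1/12) / (2 * \<sigma>\<^sup>2)" for i j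
  have Q_pos: "Q y > 0" for y unfolding Q_def using \<sigma> by (simp add: gauss_bin_pos prod_pos)
  have "(\<Sum>x\<in>S. Q (Y x)) = (\<Sum>y\<in>(\<lambda>x. restrict (Y x) I) ` S. Q y)"
    using inj by (simp add: sum.reindex Q_def)
  also have "\<dots> \<le> (\<Sum>y\<in>PiE I (\<lambda>_. {..b}). Q y)"
    using bounded Q_pos by (intro sum_mono2 finite_PiE I) (auto simp: less_imp_le)
  also have "\<dots> = (\<Prod>i\<in>I. \<Sum>j\<le>b. gauss_bin (\<mu> i) \<sigma> j)"
    unfolding Q_def by (rule prod_sum_PiE[symmetric]) (use I in auto)
  also have "\<dots> \<le> 1"
    using \<sigma> I by (intro prod_le_1 sum_nonneg sum_gauss_bin_le_1 conjI) (auto simp: gauss_bin_pos less_imp_le)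
  finally have "ln N \<le> (\<Sum>x\<in>S. - ln (Q (Y x))) / N"
    unfolding N_def using S Q_pos by (intro ln_card_le_cross_entropy) auto
  also have "\<dots> \<le> (\<Sum>x\<in>S. \<Sum>i\<in>I. e i (Y x i)) / N"
  proof (intro divide_right_mono sum_mono)
    fix x
    have "- ln (Q (Y x)) = (\<Sum>i\<in>I. - ln (gauss_bin (\<mu> i) \<sigma> (Y x i)))"
      unfolding Q_def using \<sigma> I by (subst ln_prod) (auto simp: sum_negf gauss_bin_pos[THEN less_imp_neq, THEN not_sym])
    also have "\<dots> \<le> (\<Sum>i\<in>I. e i (Y x i))"
      unfolding e_def by (intro sum_mono minus_ln_gauss_bin_le \<sigma>)
    finally show "- ln (Q (Y x)) \<le> (\<Sum>i\<in>I. e i (Y x i))" .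
  qed (use N in auto)
  also have "\<dots> = (\<Sum>i\<in>I. (\<Sum>x\<in>S. e i (Y x i)) / N)"
    by (subst sum.swap) (simp add: sum_divide_distrib)
  also have "\<dots> = (\<Sum>i\<in>I. ln (2 * pi * \<sigma>\<^sup>2) / 2
           + ((\<Sum>x\<in>S. (real (Y x i) - \<mu> i)\<^sup>2) / N + 1/12) / (2 * \<sigma>\<^sup>2))"
  proof (rule sum.cong[OF refl])
    fix i
    have "(\<Sum>x\<in>S. e i (Y x i)) = N * (ln (2 * pi * \<sigma>\<^sup>2) / 2)
        + ((\<Sum>x\<in>S. (real (Y x i) - \<mu> i)\<^sup>2) + N / 12) / (2 * \<sigma>\<^sup>2)"
      unfolding e_def N_def by (simp add: sum.distrib sum_divide_distrib[symmetric] add_divide_distrib)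
    then show "(\<Sum>x\<in>S. e i (Y x i)) / N = ln (2 * pi * \<sigma>\<^sup>2) / 2
        + ((\<Sum>x\<in>S. (real (Y x i) - \<mu> i)\<^sup>2) / N + 1/12) / (2 * \<sigma>\<^sup>2)"
      using N \<sigma> by (simp add: field_simps)
  qed
  finally show ?thesis unfolding N_def .
qed

section \<open>Moments of the hypergeometric distribution\<close>

lemma card_supersets_with_card:
  assumes U: "finite U" and T: "T \<subseteq> U" and k: "card T \<le> k"
  shows "card {A. A \<subseteq> U \<and> card A = k \<and> T \<subseteq> A} = (card U - card T) choose (k - card T)"
proof -
  have fT: "finite T" using U T finite_subset by blast
  have "bij_betw (\<lambda>A. A - T) {A. A \<subseteq> U \<and> card A = k \<and> T \<subseteq> A} {B. B \<subseteq> U - T \<and> card B = k - card T}"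
  proof (rule bij_betw_byWitness[where f'="\<lambda>B. B \<union> T"])
    show "(\<lambda>A. A - T) ` {A. A \<subseteq> U \<and> card A = k \<and> T \<subseteq> A} \<subseteq> {B. B \<subseteq> U - T \<and> card B = k - card T}"
      using fT by (auto simp: card_Diff_subset)
    show "(\<lambda>B. B \<union> T) ` {B. B \<subseteq> U - T \<and> card B = k - card T} \<subseteq> {A. A \<subseteq> U \<and> card A = k \<and> T \<subseteq> A}"
    proof safe
      fix B assume B: "B \<subseteq> U - T" "card B = k - card T"
      have "finite B" "B \<inter> T = {}" using B U finite_subset by auto
      then show "card (B \<union> T) = k" using B k fT by (simp add: card_Un_disjoint)
    qed (use T in auto)
  qed auto
  then have "card {A. A \<subseteq> U \<and> card A = k \<and> T \<subseteq> A} = card {B. B \<subseteq> U - T \<and> card B = k - card T}"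
    by (rule bij_betw_same_card)
  also have "\<dots> = (card U - card T) choose (k - card T)"
    using U T fT by (simp add: n_subsets card_Diff_subset)
  finally show ?thesis .
qed

lemma card_Int_eq_sum_of_bool: "finite R \<Longrightarrow> card (A \<inter> R) = (\<Sum>j\<in>R. of_bool (j \<in> A))"
  by (simp add: Int_commute Int_def)

lemma sum_of_bool_mem_subsets:
  assumes "j < n" "1 \<le> k"
  shows "(\<Sum>A\<in>{A. A \<subseteq> {..<n} \<and> card A = k}. of_bool (j \<in> A)) = (n - 1) choose (k - 1)"
proof -
  have "(\<Sum>A\<in>{A. A \<subseteq> {..<n} \<and> card A = k}. of_bool (j \<in> A))
      = card {A. A \<subseteq> {..<n} \<and> card A = k \<and> {j} \<subseteq> A}"
    by (simp add: Int_def finite_subset[of _ "Pow {..<n}"])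
  then show ?thesis using assms card_supersets_with_card[of "{..<n}" "{j}" k] by simp
qed

lemma sum_of_bool_mem_pair_subsets:
  assumes "j < n" "j' < n" "j \<noteq> j'"
  shows "(\<Sum>A\<in>{A. A \<subseteq> {..<n} \<and> card A = k}. of_bool (j \<in> A \<and> j' \<in> A))
           = (if 2 \<le> k then (n - 2) choose (k - 2) else 0)"
proof -
  have sum_eq: "(\<Sum>A\<in>{A. A \<subseteq> {..<n} \<and> card A = k}. of_bool (j \<in> A \<and> j' \<in> A))
      = card {A. A \<subseteq> {..<n} \<and> card A = k \<and> {j, j'} \<subseteq> A}"
    by (simp add: Int_def finite_subset[of _ "Pow {..<n}"])
  show ?thesis
  proof (cases "2 \<le> k")
    case True
    then show ?thesis
      using assms card_supersets_with_card[of "{..<n}" "{j, j'}" k] by (simp add: sum_eq numeral_2_eq_2)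
  next
    case False
    have "card {j, j'} \<le> card A" if "finite A" "{j, j'} \<subseteq> A" for A
      using that by (intro card_mono)
    then have "{A. A \<subseteq> {..<n} \<and> card A = k \<and> {j, j'} \<subseteq> A} = {}"
      using False assms by (force dest: finite_subset[OF _ finite_lessThan])
    then show ?thesis using False by (simp add: sum_eq)
  qed
qed

lemma sum_card_Int_subsets:
  fixes n k :: nat
  defines "S \<equiv> {A. A \<subseteq> {..<n} \<and> card A = k}"
  assumes R: "R \<subseteq> {..<n}" and k: "1 \<le> k"
  shows "(\<Sum>A\<in>S. card (A \<inter> R)) = card R * ((n - 1) choose (k - 1))"
proof -
  have fS: "finite S" unfolding S_def by (rule finite_subset[of _ "Pow {..<n}"]) auto
  have fR: "finite R" using R finite_subset by blast
  have "(\<Sum>A\<in>S. card (A \<inter> R)) = (\<Sum>j\<in>R. \<Sum>A\<in>S. of_bool (j \<in> A))"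
    using fR by (simp add: card_Int_eq_sum_of_bool sum.swap[of _ S])
  also have "\<dots> = (\<Sum>j\<in>R. (n - 1) choose (k - 1))"
    using R k unfolding S_def by (intro sum.cong refl sum_of_bool_mem_subsets) auto
  finally show ?thesis by simp
qed

lemma sum_card_Int_subsets_squared:
  fixes n k :: nat
  defines "S \<equiv> {A. A \<subseteq> {..<n} \<and> card A = k}"
  assumes R: "R \<subseteq> {..<n}" and k: "1 \<le> k"
  shows "(\<Sum>A\<in>S. (card (A \<inter> R))\<^sup>2) = card R * ((n - 1) choose (k - 1))
           + card R * (card R - 1) * (if 2 \<le> k then (n - 2) choose (k - 2) else 0)"
proof -
  define c1 where "c1 = (n - 1) choose (k - 1)"
  define c2 where "c2 = (if 2 \<le> k then (n - 2) choose (k - 2) else 0)"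
  have fS: "finite S" unfolding S_def by (rule finite_subset[of _ "Pow {..<n}"]) auto
  have fR: "finite R" using R finite_subset by blast
  have pairs: "(\<Sum>A\<in>S. of_bool (j \<in> A \<and> j' \<in> A)) = (if j = j' then c1 else c2)"
    if "j \<in> R" "j' \<in> R" for j j'
  proof (cases "j = j'")
    case True
    then show ?thesis using that R k sum_of_bool_mem_subsets[of j n k]
      unfolding S_def c1_def by (auto simp del: sum_of_bool_eq)
  next
    case False
    have "j < n" "j' < n" using that R by auto
    with False show ?thesis using sum_of_bool_mem_pair_subsets[of j n j' k]
      unfolding S_def c2_def by (simp del: sum_of_bool_eq)
  qed
  have row: "(\<Sum>j'\<in>R. if j = j' then c1 else c2) = c1 + (card R - 1) * c2" if "j \<in> R" for j
  proof -
    have "(\<Sum>j'\<in>R. if j = j' then c1 else c2) = c1 + (\<Sum>j'\<in>R - {j}. c2)"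
      using that fR by (simp add: sum.remove[of R j])
    then show ?thesis using that fR by simp
  qed
  have "(\<Sum>A\<in>S. (card (A \<inter> R))\<^sup>2) = (\<Sum>A\<in>S. \<Sum>j\<in>R. \<Sum>j'\<in>R. of_bool (j \<in> A \<and> j' \<in> A))"
    unfolding card_Int_eq_sum_of_bool[OF fR] power2_eq_square sum_product
    by (intro sum.cong refl) (simp add: of_bool_conj)
  also have "\<dots> = (\<Sum>j\<in>R. \<Sum>j'\<in>R. \<Sum>A\<in>S. of_bool (j \<in> A \<and> j' \<in> A))"
    by (simp add: sum.swap[of _ S])
  also have "\<dots> = (\<Sum>j\<in>R. c1 + (card R - 1) * c2)"
    using pairs row by (intro sum.cong refl) simp
  also have "\<dots> = card R * c1 + card R * (card R - 1) * c2" by (simp add: algebra_simps)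
  finally show ?thesis unfolding c1_def c2_def .
qed

text \<open>E[X(X-1)] \<le> (E X)^2 for X = card (A \<inter> R), card R = w, multiplied by (n choose k)^2.\<close>
lemma hypergeometric_factorial_moment_le:
  fixes n k w :: nat
  assumes "1 \<le> k" "k \<le> n" "w \<le> n" "2 \<le> n"
  shows "(n choose k) * (w * (w - 1) * (if 2 \<le> k then (n - 2) choose (k - 2) else 0)) \<le> (w * ((n - 1) choose (k - 1)))\<^sup>2"
proof (cases "2 \<le> k \<and> 1 \<le> w")
  case False
  then show ?thesis by auto
next
  case True
  define N where "N = n choose k"
  define c1 where "c1 = (n - 1) choose (k - 1)"
  define c2 where "c2 = (n - 2) choose (k - 2)"
  have e1: "k * N = n * c1" unfolding N_def c1_def using assms by (intro times_binomial_minus1_eq) auto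
  have e2: "(k - 1) * c1 = (n - 1) * c2"
  proof -
    have "(k - 1) * ((n - 1) choose (k - 1)) = (n - 1) * ((n - 1 - 1) choose (k - 1 - 1))"
      using True by (intro times_binomial_minus1_eq) auto
    then show ?thesis unfolding c1_def c2_def by (simp add: diff_diff_add numeral_2_eq_2)
  qed
  obtain k0 w0 n0 where k0: "k = k0 + 1" and w0: "w = w0 + 1" and n0: "n = n0 + 1"
    using True assms by (metis add.commute le_Suc_ex one_le_numeral order_trans plus_1_eq_Suc)
  have key: "n * (k - 1) * (w - 1) \<le> k * (n - 1) * w"
  proof -
    have "w0 \<le> n0" using assms w0 n0 by simp
    then have "k0 * w0 \<le> k0 * n0" by (rule mult_left_mono) simp
    moreover have "(k0 + 1) * n0 * (w0 + 1) = k0 * n0 * w0 + k0 * n0 + n0 * w0 + n0" by (simp add: algebra_simps)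
    moreover have "(n0 + 1) * k0 * w0 = k0 * n0 * w0 + k0 * w0" by (simp add: algebra_simps)
    ultimately have "(n0 + 1) * k0 * w0 \<le> (k0 + 1) * n0 * (w0 + 1)" by linarith
    then show ?thesis using k0 w0 n0 by simp
  qed
  have "k * (n - 1) * (N * (w * (w - 1) * c2)) = (k * N) * ((n - 1) * c2) * w * (w - 1)" by (simp only: ac_simps)
  also have "\<dots> = n * c1 * ((k - 1) * c1) * w * (w - 1)" using e1 e2 by simp
  also have "\<dots> = (n * (k - 1) * (w - 1)) * (w * c1 * c1)" by (simp only: ac_simps)
  also have "\<dots> \<le> (k * (n - 1) * w) * (w * c1 * c1)" using key by (rule mult_right_mono) simp
  also have "\<dots> = k * (n - 1) * (w * c1)\<^sup>2" by (simp only: ac_simps power2_eq_square)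
  finally have "k * (n - 1) * (N * (w * (w - 1) * c2)) \<le> k * (n - 1) * (w * c1)\<^sup>2" .
  moreover have "k * (n - 1) > 0" using assms by simp
  ultimately have "N * (w * (w - 1) * c2) \<le> (w * c1)\<^sup>2" by (simp add: mult_le_cancel1 del: mult_pos_pos) 
  then show ?thesis using True unfolding N_def c1_def c2_def by simp
qed

lemma hypergeometric_variance_le_mean:
  fixes n k :: nat and R :: "nat set"
  defines "S \<equiv> {A. A \<subseteq> {..<n} \<and> card A = k}"
  assumes R: "R \<subseteq> {..<n}" and k: "1 \<le> k" "k \<le> n" and n: "2 \<le> n"
  shows "(\<Sum>A\<in>S. (real (card (A \<inter> R)) - (\<Sum>B\<in>S. real (card (B \<inter> R))) / real (card S))\<^sup>2) / real (card S)
         \<le> (\<Sum>B\<in>S. real (card (B \<inter> R))) / real (card S)"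
proof -
  define N where "N = card S"
  define s1 where "s1 = (\<Sum>A\<in>S. card (A \<inter> R))"
  define s2 where "s2 = (\<Sum>A\<in>S. (card (A \<inter> R))\<^sup>2)"
  have w: "card R \<le> n" using card_mono[OF _ R] by simp
  have NS: "N = n choose k" unfolding N_def S_def using n_subsets[of "{..<n}" k] by simp
  have Np: "N > 0" using NS k by simp
  have m: "s1 = card R * ((n - 1) choose (k - 1))"
          "s2 = card R * ((n - 1) choose (k - 1)) + card R * (card R - 1) * (if 2 \<le> k then (n - 2) choose (k - 2) else 0)"
    unfolding s1_def s2_def S_def using sum_card_Int_subsets[OF R k(1)] sum_card_Int_subsets_squared[OF R k(1)]
    by auto
  have hi: "(n choose k) * (card R * (card R - 1) * (if 2 \<le> k then (n - 2) choose (k - 2) else 0)) \<le> (card R * ((n - 1) choose (k - 1)))\<^sup>2"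
    by (rule hypergeometric_factorial_moment_le[OF k w n])
  have nat_ineq: "N * s2 \<le> s1\<^sup>2 + N * s1"
  proof -
    have "N * s2 = N * s1 + (n choose k) * (card R * (card R - 1) * (if 2 \<le> k then (n - 2) choose (k - 2) else 0))"
      unfolding m NS by (rule distrib_left)
    also have "\<dots> \<le> N * s1 + s1\<^sup>2" using hi unfolding m(1)[symmetric] by (rule add_left_mono)
    finally show ?thesis by (simp add: add.commute)
  qed
  then have real_ineq: "real N * real s2 \<le> (real s1)\<^sup>2 + real N * real s1"
    by (metis of_nat_add of_nat_le_iff of_nat_mult of_nat_power)
  define \<mu> where "\<mu> = real s1 / real N"
  have rs1: "(\<Sum>B\<in>S. real (card (B \<inter> R))) = real s1" unfolding s1_def by simp
  have rs2: "(\<Sum>B\<in>S. (real (card (B \<inter> R)))\<^sup>2) = real s2" unfolding s2_def by simp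
  have "(\<Sum>A\<in>S. (real (card (A \<inter> R)) - \<mu>)\<^sup>2) = (\<Sum>A\<in>S. (real (card (A \<inter> R)))\<^sup>2 - 2 * \<mu> * real (card (A \<inter> R)) + \<mu>\<^sup>2)"
    by (rule sum.cong) (auto simp: power2_eq_square algebra_simps)
  also have "\<dots> = real s2 - 2 * \<mu> * real s1 + real N * \<mu>\<^sup>2"
    unfolding rs2[symmetric] rs1[symmetric] N_def by (simp add: sum.distrib sum_subtractf sum_distrib_left)
  also have "\<dots> = real s2 - (real s1)\<^sup>2 / real N"
    unfolding \<mu>_def using Np by (simp add: field_simps power2_eq_square)
  finally have eq: "(\<Sum>A\<in>S. (real (card (A \<inter> R)) - \<mu>)\<^sup>2) = real s2 - (real s1)\<^sup>2 / real N" .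
  have "(real s2 - (real s1)\<^sup>2 / real N) / real N \<le> real s1 / real N"
  proof -
    have "real s2 - (real s1)\<^sup>2 / real N \<le> real s1"
      using real_ineq Np by (simp add: field_simps)
    then show ?thesis using Np by (simp add: divide_right_mono)
  qed
  then show ?thesis unfolding rs1 using eq unfolding \<mu>_def N_def by simp
qed

section \<open>A lower bound on binomial coefficients\<close>

lemma binomial_Suc_step: "Suc j * (n choose Suc j) = (n - j) * (n choose j)"
  by (simp only: binomial_absorption binomial_absorb_comp)

text \<open>The k-th term of the expansion of (k + (n - k))^n is the largest of its n + 1 terms.\<close>
lemma power_le_Suc_mult_max_binomial_term:
  fixes n k :: nat
  assumes k: "0 < k" "k < n"
  shows "real n ^ n \<le> real (n + 1) * (real (n choose k) * real k ^ k * real (n - k) ^ (n - k))"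
proof -
  define a where "a j = real (n choose j) * real k ^ j * real (n - k) ^ (n - j)" for j
  have step: "a (Suc j) * (real (Suc j) * real (n - k)) = a j * (real (n - j) * real k)" if "j < n" for j
  proof -
    have b: "real (Suc j) * real (n choose Suc j) = real (n - j) * real (n choose j)"
      using binomial_Suc_step[of j n] by (metis of_nat_mult)
    have p: "real (n - k) ^ (n - Suc j) * real (n - k) = real (n - k) ^ (n - j)"
      using that by (metis Suc_diff_Suc power_Suc mult.commute)
    have "a (Suc j) * (real (Suc j) * real (n - k))
        = (real (Suc j) * real (n choose Suc j)) * real k ^ Suc j * (real (n - k) ^ (n - Suc j) * real (n - k))"
      unfolding a_def by (simp only: ac_simps)
    also have "\<dots> = a j * (real (n - j) * real k)" unfolding a_def b p by (simp add: add.commute)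
    finally show ?thesis .
  qed
  have pos: "real (Suc j) * real (n - k) > 0" for j using k by simp
  have up: "a j \<le> a (Suc j)" if "j < k" for j
  proof -
    have "real (Suc j) * real (n - k) \<le> real (n - j) * real k"
      using that k mult_left_mono[of "real j + 1" "real k" "real n"] by (simp add: of_nat_diff algebra_simps)
    then have "a j * (real (Suc j) * real (n - k)) \<le> a j * (real (n - j) * real k)"
      by (rule mult_left_mono) (simp add: a_def)
    also have "\<dots> = a (Suc j) * (real (Suc j) * real (n - k))" using step[of j] that k by simp
    finally show ?thesis using pos[of j] by (rule mult_right_le_imp_le)
  qed
  have down: "a (Suc j) \<le> a j" if "k \<le> j" "j < n" for j
  proof -
    have "real k * real n \<le> real j * real n" "real k \<le> real n"
      "real (n - j) = real n - real j" "real (n - k) = real n - real k"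
      using that k by (auto intro: mult_right_mono)
    then have "real (n - j) * real k \<le> real (Suc j) * real (n - k)"
      by (simp add: algebra_simps)
    then have "a (Suc j) * (real (Suc j) * real (n - k)) \<le> a j * (real (Suc j) * real (n - k))"
      unfolding step[OF that(2)] by (rule mult_left_mono) (simp add: a_def)
    then show ?thesis using pos[of j] by (rule mult_right_le_imp_le)
  qed
  have a_le: "a j \<le> a k" if "j \<le> n" for j
  proof (cases "j \<le> k")
    case True
    have "a j \<le> a m" if "j \<le> m" "m \<le> k" for m
      using that by (induction m rule: dec_induct) (auto intro: order_trans[OF _ up])
    then show ?thesis using True by simp
  next
    case False
    have "a m \<le> a k" if "k \<le> m" "m \<le> n" for m
      using that by (induction m rule: dec_induct) (auto intro: order_trans[OF down])
    then show ?thesis using False that by simp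
  qed
  have "real n ^ n = (real k + real (n - k)) ^ n" using k by simp
  also have "\<dots> = (\<Sum>j\<le>n. a j)" unfolding a_def binomial_ring by simp
  also have "\<dots> \<le> (\<Sum>j\<le>n. a k)" by (rule sum_mono) (use a_le in auto)
  also have "\<dots> = real (n + 1) * a k" by simp
  finally show ?thesis unfolding a_def .
qed

lemma ln_binomial_ge_entropy:
  fixes n k :: nat
  assumes k: "1 \<le> k" "2 * k \<le> n"
  shows "real k * ln (1 + real n / real k) \<le> ln (real (n choose k)) + ln (real n + 1)"
proof -
  define N where "N = real n"
  define K where "K = real k"
  have KN: "0 < K" "K < N" "2 * K \<le> N" unfolding N_def K_def using k by auto
  have C: "real (n choose k) > 0" using k by simp
  have "real n ^ n \<le> real (n + 1) * (real (n choose k) * real k ^ k * real (n - k) ^ (n - k))"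
    using k by (intro power_le_Suc_mult_max_binomial_term) auto
  then have "ln (real n ^ n) \<le> ln (real (n + 1) * (real (n choose k) * real k ^ k * real (n - k) ^ (n - k)))"
    using k C by (subst ln_le_cancel_iff) (auto intro!: mult_pos_pos)
  then have main: "N * ln N \<le> ln (N + 1) + ln (real (n choose k)) + K * ln K + (N - K) * ln (N - K)"
    using k C unfolding N_def K_def by (simp add: ln_mult ln_realpow of_nat_diff add.commute)
  have "K * (ln (N + K) - ln N) \<le> K * (K / N)"
  proof -
    have "ln ((N + K) / N) \<le> (N + K) / N - 1" using KN by (intro ln_le_minus_one) auto
    then show ?thesis using KN by (intro mult_left_mono) (auto simp: ln_div field_simps)
  qed
  moreover have "(N - K) * (ln (N - K) - ln N) \<le> (N - K) * (- (K / N))"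
  proof -
    have "ln ((N - K) / N) \<le> (N - K) / N - 1" using KN by (intro ln_le_minus_one) auto
    then show ?thesis using KN by (intro mult_left_mono) (auto simp: ln_div field_simps)
  qed
  moreover have "K * (K / N) + (N - K) * (- (K / N)) \<le> 0"
  proof -
    have "K * (K / N) + (N - K) * (- (K / N)) = (2 * K - N) * (K / N)" using KN by (simp add: field_simps)
    also have "\<dots> \<le> 0" using KN by (intro mult_nonpos_nonneg) auto
    finally show ?thesis .
  qed
  moreover have "K * ln (1 + N / K) = K * ln (N + K) - K * ln K"
  proof -
    have "1 + N / K = (N + K) / K" using KN by (simp add: field_simps)
    then show ?thesis using KN by (simp add: ln_div right_diff_distrib)
  qed
  ultimately show ?thesis using main unfolding N_def K_def by (simp add: algebra_simps)
qed

lemma ln_central_binomial_ge: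
  fixes n k :: nat
  assumes k: "n < 2 * k" "k \<le> n"
  shows "real k * ln (1 + real n / real k) \<le> ln (real (n choose (n div 2))) + ln (real n + 1)"
proof -
  have "(2::real) ^ n = (\<Sum>j\<le>n. real (n choose j))"
    using choose_row_sum[of n] by (metis of_nat_numeral of_nat_power of_nat_sum)
  also have "\<dots> \<le> (\<Sum>j\<le>n. real (n choose (n div 2)))"
    by (intro sum_mono) (simp add: binomial_maximum)
  finally have "(2::real) ^ n \<le> (real n + 1) * real (n choose (n div 2))" by (simp add: add.commute)
  then have "ln ((2::real) ^ n) \<le> ln ((real n + 1) * real (n choose (n div 2)))"
    by (subst ln_le_cancel_iff) auto
  then have main: "real n * ln 2 \<le> ln (real n + 1) + ln (real (n choose (n div 2)))"
    by (simp add: ln_realpow ln_mult not_less div_le_dividend)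
  define x where "x = real n / real k"
  have x: "x \<ge> 1" unfolding x_def using k by simp
  have ln2: "ln (2::real) \<ge> 1/2"
    using ln_le_minus_one[of "1/2::real"] by (simp add: ln_div)
  have "ln ((1 + x) / 2) \<le> (1 + x) / 2 - 1" using x by (intro ln_le_minus_one) auto
  then have "ln (1 + x) \<le> ln 2 + (x - 1) * (1/2)" using x by (simp add: ln_div field_simps)
  also have "\<dots> \<le> ln 2 + (x - 1) * ln 2" using x ln2 by (intro add_left_mono mult_left_mono) auto
  finally have "real k * ln (1 + x) \<le> real k * (x * ln 2)" by (intro mult_left_mono) (auto simp: algebra_simps)
  also have "real k * (x * ln 2) = real n * ln 2" unfolding x_def using k by simp
  finally show ?thesis using main unfolding x_def by simp
qed

lemma exists_ln_binomial_ge: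
  fixes n k :: nat
  assumes "2 \<le> n" "1 \<le> k" "k \<le> n"
  obtains k' where "1 \<le> k'" "k' \<le> k" "k' \<le> n"
    "real k * ln (1 + real n / real k) \<le> ln (real (n choose k')) + ln (real n + 1)"
proof (cases "2 * k \<le> n")
  case True
  then show ?thesis using that[of k] assms ln_binomial_ge_entropy by auto
next
  case False
  then show ?thesis using that[of "n div 2"] assms ln_central_binomial_ge by auto
qed

section \<open>Test matrices\<close>

definition row_support :: "nat \<Rightarrow> (nat \<Rightarrow> nat \<Rightarrow> nat) \<Rightarrow> nat \<Rightarrow> nat set" where
  "row_support n M i = {j. j < n \<and> M i j = 1}"

lemma mat_vec_indicator:
  assumes "binary_matrix t n M" "i < t" "A \<subseteq> {..<n}"
  shows "mat_vec n M (indicator A) i = card (A \<inter> row_support n M i)"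
proof -
  have "mat_vec n M (indicator A) i = (\<Sum>j<n. of_bool (j \<in> A \<and> M i j = 1))"
    unfolding mat_vec_def
  proof (rule sum.cong[OF refl])
    fix j assume "j \<in> {..<n}"
    then have "M i j \<in> {0, 1}" using assms(1,2) unfolding binary_matrix_def by auto
    then show "M i j * indicator A j = of_bool (j \<in> A \<and> M i j = 1)" by (auto simp: indicator_def)
  qed
  also have "\<dots> = card (A \<inter> row_support n M i)"
    using assms(3) by (simp add: row_support_def) (rule arg_cong[where f = card], blast)
  finally show ?thesis .
qed

lemma binary_vec_indicator: "A \<subseteq> {..<n} \<Longrightarrow> binary_vec n (indicator A)"
  unfolding binary_vec_def by (auto simp: indicator_def)

lemma sparse_indicator:
  assumes "A \<subseteq> {..<n}" "card A \<le> k"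
  shows "Defs.sparse n k (indicator A)"
proof -
  have "{j. j < n \<and> indicator A j \<noteq> (0::nat)} = A" using assms(1) by (auto simp: indicator_def)
  then show ?thesis unfolding Defs.sparse_def hamming_weight_def using assms(2) by simp
qed

lemma QNAGT_scheme_inj_on_subsets:
  assumes M: "binary_matrix t n M" and Q: "QNAGT_scheme k t n M" and "k' \<le> k"
  shows "inj_on (\<lambda>A. restrict (\<lambda>i. card (A \<inter> row_support n M i)) {..<t}) {A. A \<subseteq> {..<n} \<and> card A = k'}"
proof (rule inj_onI, rule ccontr)
  fix A B assume A: "A \<in> {A. A \<subseteq> {..<n} \<and> card A = k'}" and B: "B \<in> {A. A \<subseteq> {..<n} \<and> card A = k'}"
    and eq: "restrict (\<lambda>i. card (A \<inter> row_support n M i)) {..<t} = restrict (\<lambda>i. card (B \<inter> row_support n M i)) {..<t}"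
    and "A \<noteq> B"
  then have "indicator A \<noteq> (indicator B :: nat \<Rightarrow> nat)"
    by (metis indicator_eq_1_iff set_eqI)
  with A B \<open>k' \<le> k\<close> Q obtain i where i: "i < t" "mat_vec n M (indicator A) i \<noteq> mat_vec n M (indicator B) i"
    unfolding QNAGT_scheme_def by (metis (mono_tags) mem_Collect_eq binary_vec_indicator sparse_indicator)
  then show False using fun_cong[OF eq, of i] A B by (simp add: mat_vec_indicator[OF M])
qed

lemma runlength_constrained_rows_disjoint:
  assumes "runlength_constrained d t n M" "i < i'" "i' < t" "i' \<le> i + d"
  shows "row_support n M i \<inter> row_support n M i' = {}"
proof -
  have False if "j < n" "M i j = 1" "M i' j = 1" for j
  proof -
    have "d + 1 \<le> i' - i" using assms that unfolding runlength_constrained_def by (meson less_trans)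
    then show False using assms(2,4) by arith
  qed
  then show ?thesis unfolding row_support_def by blast
qed

lemma sum_card_Int_block_le:
  assumes M: "runlength_constrained d t n M" and a: "a + (d + 1) \<le> t" and "finite A"
  shows "(\<Sum>i\<in>{a..<a + (d + 1)}. card (A \<inter> row_support n M i)) \<le> card A"
proof -
  have disj: "(A \<inter> row_support n M i) \<inter> (A \<inter> row_support n M i') = {}"
    if "i \<in> {a..<a + (d + 1)}" "i' \<in> {a..<a + (d + 1)}" "i \<noteq> i'" for i i'
  proof (cases "i < i'")
    case True
    then show ?thesis using that a runlength_constrained_rows_disjoint[OF M, of i i'] by auto
  next
    case False
    then show ?thesis using that a runlength_constrained_rows_disjoint[OF M, of i' i] by auto
  qed
  have "(\<Sum>i\<in>{a..<a + (d + 1)}. card (A \<inter> row_support n M i))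
      = card (\<Union>i\<in>{a..<a + (d + 1)}. A \<inter> row_support n M i)"
    using \<open>finite A\<close> disj by (intro card_UN_disjoint[symmetric]) auto
  also have "\<dots> \<le> card A" using \<open>finite A\<close> by (intro card_mono) auto
  finally show ?thesis .
qed

lemma sum_card_Int_rows_le:
  assumes "runlength_constrained d t n M" "t = m * (d + 1)" "finite A"
  shows "(\<Sum>i<t. card (A \<inter> row_support n M i)) \<le> m * card A"
proof -
  have "(\<Sum>i<t. card (A \<inter> row_support n M i))
      = (\<Sum>b<m. \<Sum>i\<in>{b * (d + 1)..<b * (d + 1) + (d + 1)}. card (A \<inter> row_support n M i))"
    unfolding assms(2) by (rule sum.nat_group[symmetric])
  also have "\<dots> \<le> (\<Sum>b<m. card A)"
  proof (intro sum_mono sum_card_Int_block_le[OF assms(1) _ assms(3)])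
    fix b assume "b \<in> {..<m}"
    then show "b * (d + 1) + (d + 1) \<le> t" unfolding assms(2)
      by (metis add.commute lessThan_iff less_eq_Suc_le mult_Suc mult_le_mono1)
  qed
  finally show ?thesis by simp
qed

lemma mean_sum_card_Int_rows_le:
  assumes M: "runlength_constrained d t n M" and t: "t = m * (d + 1)"
    and S: "finite S" "S \<noteq> {}" and A: "\<And>A. A \<in> S \<Longrightarrow> finite A \<and> card A \<le> k"
  shows "(\<Sum>i<t. (\<Sum>A\<in>S. real (card (A \<inter> row_support n M i))) / real (card S))
           \<le> real t * (real k / real (d + 1))"
proof -
  have N: "real (card S) > 0" using S by (simp add: card_gt_0_iff)
  have "(\<Sum>i<t. (\<Sum>A\<in>S. real (card (A \<inter> row_support n M i))) / real (card S))
      = (\<Sum>A\<in>S. real (\<Sum>i<t. card (A \<inter> row_support n M i))) / real (card S)"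
    by (simp add: sum_divide_distrib[symmetric] sum.swap[of _ S])
  also have "\<dots> \<le> (\<Sum>A\<in>S. real (m * k)) / real (card S)"
  proof (intro divide_right_mono sum_mono)
    fix A assume "A \<in> S"
    then have "(\<Sum>i<t. card (A \<inter> row_support n M i)) \<le> m * k"
      using A sum_card_Int_rows_le[OF M t] by (meson le_trans mult_le_mono2)
    then show "real (\<Sum>i<t. card (A \<inter> row_support n M i)) \<le> real (m * k)" by (simp only: of_nat_le_iff)
  qed simp
  also have "\<dots> = real t * (real k / real (d + 1))" using N unfolding t by (simp add: field_simps)
  finally show ?thesis .
qed

lemma ln_binomial_le_QNAGT_rows:
  fixes n k k' d t m :: nat
  assumes t: "t = m * (d + 1)" and M: "binary_matrix t n M" "runlength_constrained d t n M"
    "QNAGT_scheme k t n M"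
    and k': "1 \<le> k'" "k' \<le> k" "k' \<le> n" and n: "2 \<le> n"
  shows "ln (real (n choose k')) \<le> real t / 2 * ln (2 * pi * exp 1 * (real k / real (d + 1) + 1/12))"
proof -
  define S where "S = {A. A \<subseteq> {..<n} \<and> card A = k'}"
  define N where "N = real (card S)"
  define Y where "Y A i = card (A \<inter> row_support n M i)" for A i
  define \<mu> where "\<mu> i = (\<Sum>A\<in>S. real (Y A i)) / N" for i
  define r where "r = real k / real (d + 1)"
  define \<sigma> where "\<sigma> = sqrt (r + 1/12)"
  have fS: "finite S" unfolding S_def by (rule finite_subset[of _ "Pow {..<n}"]) auto
  have cardS: "card S = n choose k'" unfolding S_def using n_subsets[of "{..<n}" k'] by simp
  have N: "N > 0" unfolding N_def cardS using k' by simp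
  have r: "r \<ge> 0" unfolding r_def by simp
  have \<sigma>: "\<sigma> > 0" "\<sigma>\<^sup>2 = r + 1/12" unfolding \<sigma>_def using r by auto
  have Y_le: "Y A i \<le> k'" if "A \<in> S" for A i
    using that card_mono[of A "A \<inter> row_support n M i"] finite_subset[of A "{..<n}"]
    unfolding S_def Y_def by auto
  have "S \<noteq> {}" using N unfolding N_def by auto
  have "inj_on (\<lambda>A. restrict (Y A) {..<t}) S"
    unfolding Y_def S_def by (rule QNAGT_scheme_inj_on_subsets[OF M(1,3) k'(2)])
  then have "ln N \<le> (\<Sum>i<t. ln (2 * pi * \<sigma>\<^sup>2) / 2 + ((\<Sum>A\<in>S. (real (Y A i) - \<mu> i)\<^sup>2) / N + 1/12) / (2 * \<sigma>\<^sup>2))"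
    unfolding N_def using fS \<open>S \<noteq> {}\<close> Y_le \<sigma>(1) by (intro ln_card_le_gaussian_code_length[where b = k']) auto
  also have "\<dots> = real t * ln (2 * pi * \<sigma>\<^sup>2) / 2
      + ((\<Sum>i<t. (\<Sum>A\<in>S. (real (Y A i) - \<mu> i)\<^sup>2) / N) + real t / 12) / (2 * \<sigma>\<^sup>2)"
    by (simp add: sum.distrib sum_divide_distrib[symmetric] add_divide_distrib)
  also have "\<dots> \<le> real t * ln (2 * pi * \<sigma>\<^sup>2) / 2 + (real t * r + real t / 12) / (2 * \<sigma>\<^sup>2)"
  proof -
    have "(\<Sum>A\<in>S. (real (Y A i) - \<mu> i)\<^sup>2) / N \<le> \<mu> i" for i
      unfolding \<mu>_def N_def Y_def S_def
      by (rule hypergeometric_variance_le_mean[OF _ k'(1,3) n]) (auto simp: row_support_def)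
    then have "(\<Sum>i<t. (\<Sum>A\<in>S. (real (Y A i) - \<mu> i)\<^sup>2) / N) \<le> (\<Sum>i<t. \<mu> i)"
      by (rule sum_mono)
    also have "\<dots> \<le> real t * r"
      unfolding \<mu>_def Y_def N_def r_def using fS \<open>S \<noteq> {}\<close> k'(2)
      by (intro mean_sum_card_Int_rows_le[OF M(2) t]) (auto simp: S_def intro: finite_subset)
    finally show ?thesis using \<sigma>(1) by (intro add_left_mono divide_right_mono) auto
  qed
  also have "\<dots> = real t / 2 * (ln (2 * pi * (r + 1/12)) + 1)"
    unfolding \<sigma>(2) using r by (simp add: field_simps)
  also have "\<dots> = real t / 2 * ln (2 * pi * exp 1 * (real k / real (d + 1) + 1/12))"
  proof -
    have "r + 1/12 > 0" using r by linarith
    then show ?thesis unfolding r_def[symmetric] by (simp add: ln_mult)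
  qed
  finally show ?thesis unfolding N_def cardS .
qed

lemma ln_Suc_le_fraction_of_entropy:
  fixes \<delta> :: real and n k :: nat
  assumes "\<delta> > 0" "2 \<le> n" "2 / \<delta> * log 2 (real n) \<le> real k" "1 \<le> k" "k \<le> n"
  shows "ln (real n + 1) \<le> \<delta> * (real k * ln (1 + real n / real k))"
proof -
  have "real n * 2 \<le> real n * real n" using assms(2) by (intro mult_left_mono) auto
  moreover have "real n \<ge> 2" using assms(2) by simp
  ultimately have "ln (real n + 1) \<le> ln (real n * real n)" by (intro ln_mono) linarith+
  also have "\<dots> = 2 * ln (real n)" using assms(2) by (simp add: ln_mult)
  also have "\<dots> \<le> \<delta> * real k * ln 2"
    using assms(1,3) by (simp add: log_def field_simps)
  also have "\<dots> \<le> \<delta> * real k * ln (1 + real n / real k)"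
    using assms by (intro mult_left_mono) (auto simp: field_simps)
  finally show ?thesis by (simp add: mult.assoc)
qed

lemma ln_gaussian_variance_term_le:
  fixes x :: real
  assumes "x \<ge> 0"
  shows "ln (2 * pi * exp 1 * (x + 1/12)) \<le> ln (2 * pi * exp 1 * x + 2)"
proof -
  have "pi * exp 1 \<le> 4 * 3" using pi_less_4 exp_le by (intro mult_mono) auto
  then have "2 * pi * exp 1 * (x + 1/12) \<le> 2 * pi * exp 1 * x + 2" by (simp add: algebra_simps)
  then show ?thesis using assms by (intro ln_mono) auto
qed

lemma QNAGT_rows_ge:
  fixes \<delta> :: real and n k d t m :: nat
  assumes \<delta>: "\<delta> > 0" and n: "2 \<le> n" and k: "2 / \<delta> * log 2 (real n) \<le> real k" "1 \<le> k" "k \<le> n"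
    and t: "t = m * (d + 1)"
    and M: "binary_matrix t n M" "runlength_constrained d t n M" "QNAGT_scheme k t n M"
  shows "2 * (1 - \<delta>) * real k * ln (1 + real n / real k)
           \<le> real t * ln (2 * pi * exp 1 * real k / real (d + 1) + 2)"
proof -
  define L where "L = ln (2 * pi * exp 1 * real k / real (d + 1) + 2)"
  obtain k' where k': "1 \<le> k'" "k' \<le> k" "k' \<le> n"
    and entropy: "real k * ln (1 + real n / real k) \<le> ln (real (n choose k')) + ln (real n + 1)"
    by (rule exists_ln_binomial_ge[OF n k(2,3)])
  have "ln (2 * pi * exp 1 * (real k / real (d + 1) + 1/12)) \<le> L"
    using ln_gaussian_variance_term_le[of "real k / real (d + 1)"] unfolding L_def by simp
  then have "real t / 2 * ln (2 * pi * exp 1 * (real k / real (d + 1) + 1/12)) \<le> real t / 2 * L"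
    by (rule mult_left_mono) simp
  with ln_binomial_le_QNAGT_rows[OF t M k' n] have "ln (real (n choose k')) \<le> real t / 2 * L"
    by (rule order_trans)
  moreover have "ln (real n + 1) \<le> \<delta> * (real k * ln (1 + real n / real k))"
    by (rule ln_Suc_le_fraction_of_entropy[OF \<delta> n k])
  ultimately show ?thesis using entropy unfolding L_def[symmetric] by (simp add: algebra_simps)
qed

theorem theorem5:
  fixes \<delta> :: real
  assumes "\<delta> > 0"
  shows "\<exists>c::real>0. \<exists>n0::nat. \<forall>n k d t M.
           n \<ge> n0 \<and> c * log 2 (real n) \<le> real k \<and> k \<le> n \<and>
           t \<ge> 1 \<and> (d + 1) dvd t \<and>
           binary_matrix t n M \<and> runlength_constrained d t n M \<and> QNAGT_scheme k t n M
           \<longrightarrow> real t \<ge> 2 * (1 - \<delta>) * real k * log 2 (1 + real n / real k)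
                        / log 2 (2 * pi * exp 1 * real k / real (d + 1) + 2)"
proof (intro exI[of _ "2 / \<delta>"] conjI exI[of _ "2::nat"] allI impI)
  show "2 / \<delta> > 0" using assms by simp
  fix n k d t M
  assume "2 \<le> n \<and> 2 / \<delta> * log 2 (real n) \<le> real k \<and> k \<le> n \<and> t \<ge> 1 \<and> (d + 1) dvd t \<and>
    binary_matrix t n M \<and> runlength_constrained d t n M \<and> QNAGT_scheme k t n M"
  then have n: "2 \<le> n" and k: "2 / \<delta> * log 2 (real n) \<le> real k" "k \<le> n" and "(d + 1) dvd t"
    and M: "binary_matrix t n M" "runlength_constrained d t n M" "QNAGT_scheme k t n M" by auto
  obtain m where t: "t = m * (d + 1)" using \<open>(d + 1) dvd t\<close> by (metis dvd_def mult.commute)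
  have "0 < 2 / \<delta> * log 2 (real n)" using n assms by simp
  then have "1 \<le> k" using k(1) by simp
  have "0 \<le> 2 * pi * exp 1 * real k / real (d + 1)" by simp
  then have "ln (2 * pi * exp 1 * real k / real (d + 1) + 2) > 0" by (intro ln_gt_zero) linarith
  with QNAGT_rows_ge[OF assms n k(1) \<open>1 \<le> k\<close> k(2) t M]
  show "2 * (1 - \<delta>) * real k * log 2 (1 + real n / real k)
      / log 2 (2 * pi * exp 1 * real k / real (d + 1) + 2) \<le> real t"
    unfolding log_def by (simp add: divide_le_eq)
qed

end
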